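(* Let $d\ge1$, $\varepsilon>0$, and let $G:\mathbb{R}^d\to\mathbb{R}$ satisfy: $G\ge 0$ and $\mathrm{supp}(G)=\mathbb{R}^d$; $G\in W^{1,1}(\mathbb{R}^d)\cap L^\infty(\mathbb{R}^d)\cap C^2(\mathbb{R}^d)$; $G(x)=g(|x|)$ with $g'(r)<0$ for all $r>0$, $g''(0)<0$, $\lim_{r\to+\infty}g(r)=0$; and $\int G=1$. Let $\rho\in L^2(\mathbb{R}^d)$ be a minimizer on $\mathcal{P}$ of the energy $$E[\rho]=\frac12\int_{\mathbb{R}^d}\rho\,(\varepsilon\rho-G*\rho)\,dx.$$ Then $\rho\nabla(\varepsilon\rho-G*\rho)=0$ a.e. in $\mathbb{R}^d$.
   Context: $\mathcal{P}=\{\rho\in L^1(\mathbb{R}^d):\rho\ge0,\ \int_{\mathbb{R}^d}\rho\,dx=1\}$. $G*\rho(x)=\int G(x-y)\rho(y)\,dy$. *)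

theory Defs
  imports "HOL-Analysis.Analysis"
begin

definition conv :: "('a::euclidean_space \<Rightarrow> real) \<Rightarrow> ('a \<Rightarrow> real) \<Rightarrow> 'a \<Rightarrow> real" where
  "conv G \<rho> x = (\<integral>y. G (x - y) * \<rho> y \<partial>lborel)"

definition Pset :: "('a::euclidean_space \<Rightarrow> real) set" where
  "Pset = {\<rho>. integrable lborel \<rho> \<and> (AE x in lborel. \<rho> x \<ge> 0) \<and> (\<integral>x. \<rho> x \<partial>lborel) = 1}"

definition L2 :: "('a::euclidean_space \<Rightarrow> real) \<Rightarrow> bool" where
  "L2 f \<longleftrightarrow> f \<in> borel_measurable lborel \<and> integrable lborel (\<lambda>x. (f x)\<^sup>2)"

definition energy :: "real \<Rightarrow> ('a::euclidean_space \<Rightarrow> real) \<Rightarrow> ('a \<Rightarrow> real) \<Rightarrow> real" where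
  "energy \<epsilon> G \<rho> = 1/2 * (\<integral>x. \<rho> x * (\<epsilon> * \<rho> x - conv G \<rho> x) \<partial>lborel)"

definition test_fun :: "('a::euclidean_space \<Rightarrow> real) \<Rightarrow> ('a \<Rightarrow> 'a) \<Rightarrow> bool" where
  "test_fun \<phi> D\<phi> \<longleftrightarrow> (\<forall>x. (\<phi> has_derivative (\<lambda>h. D\<phi> x \<bullet> h)) (at x)) \<and>
      continuous_on UNIV D\<phi> \<and> compact (closure {x. \<phi> x \<noteq> 0})"

definition weak_grad :: "('a::euclidean_space \<Rightarrow> real) \<Rightarrow> ('a \<Rightarrow> 'a) \<Rightarrow> bool" where
  "weak_grad f w \<longleftrightarrow>
     f \<in> borel_measurable lborel \<and> w \<in> borel_measurable lborel \<and>
     (\<forall>K. compact K \<longrightarrow> set_integrable lborel K f \<and>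
        (\<forall>i\<in>Basis. set_integrable lborel K (\<lambda>x. w x \<bullet> i))) \<and>
     (\<forall>\<phi> D\<phi>. test_fun \<phi> D\<phi> \<longrightarrow> (\<forall>i\<in>Basis.
        (\<integral>x. f x * (D\<phi> x \<bullet> i) \<partial>lborel) = - (\<integral>x. (w x \<bullet> i) * \<phi> x \<partial>lborel)))"

end

theory Submission
  imports Defs
begin

(*
  A minimiser \<rho> satisfies the Euler--Lagrange equation \<epsilon>\<rho> = (G*\<rho> + c)\<^sub>+ a.e., where c is the
  Lagrange multiplier of the mass constraint: comparing \<rho> with convex combinations of \<rho> and
  uniform densities on small sets shows that the potential \<epsilon>\<rho> - G*\<rho> is at least c a.e. and equals
  c on the support of \<rho>. Hence \<rho> is a.e. a bounded continuous function of u = G*\<rho>, so u can be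
  differentiated under the integral sign (fundamental theorem of calculus along coordinate lines
  plus Fubini) and has bounded continuous partial derivatives. The chain rule applied to
  \<rho>\<^sup>2/2 = (u + c)\<^sub>+\<^sup>2/(2\<epsilon>\<^sup>2) gives \<epsilon>\<nabla>(\<rho>\<^sup>2/2) = (u + c)\<^sub>+\<nabla>u/\<epsilon> = \<rho>\<nabla>u in the weak sense, which is
  \<rho>\<nabla>(\<epsilon>\<rho> - G*\<rho>) = 0.
*)

section \<open>Lebesgue measure\<close>

lemma lborel_distr_reflect:
  "distr lborel lborel (\<lambda>x. t - x) = (lborel :: 'a::euclidean_space measure)"
proof -
  have "lborel = density (distr lborel borel (\<lambda>x. t + (-1) *\<^sub>R x)) (\<lambda>_. \<bar>-1::real\<bar> ^ DIM('a))"
    by (rule lborel_affine) simp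
  then show ?thesis
    by (simp add: density_1) (metis distr_cong sets_lborel)
qed

lemma lborel_distr_translate:
  "distr lborel lborel ((+) c) = (lborel :: 'a::euclidean_space measure)"
  using lborel_distr_plus[of c] by (metis distr_cong sets_lborel)

lemma lborel_integrable_reflect:
  fixes f :: "'a::euclidean_space \<Rightarrow> 'b::{banach, second_countable_topology}"
  assumes "integrable lborel f"
  shows "integrable lborel (\<lambda>x. f (t - x))"
  using integrable_distr_eq[of "\<lambda>x. t - x" lborel lborel f] assms lborel_distr_reflect[of t] by simp

lemma lborel_integral_reflect:
  fixes f :: "'a::euclidean_space \<Rightarrow> 'b::{banach, second_countable_topology}"
  assumes "f \<in> borel_measurable lborel"
  shows "(\<integral>x. f (t - x) \<partial>lborel) = (\<integral>x. f x \<partial>lborel)"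
  using integral_distr[of "\<lambda>x. t - x" lborel lborel f] assms lborel_distr_reflect[of t] by simp

lemma lborel_integrable_translate:
  fixes f :: "'a::euclidean_space \<Rightarrow> 'b::{banach, second_countable_topology}"
  assumes "integrable lborel f"
  shows "integrable lborel (\<lambda>x. f (c + x))"
  using integrable_distr_eq[of "(+) c" lborel lborel f] assms lborel_distr_translate[of c] by simp

lemma lborel_integral_translate:
  fixes f :: "'a::euclidean_space \<Rightarrow> 'b::{banach, second_countable_topology}"
  assumes "f \<in> borel_measurable lborel"
  shows "(\<integral>x. f (c + x) \<partial>lborel) = (\<integral>x. f x \<partial>lborel)"
  using integral_distr[of "(+) c" lborel lborel f] assms lborel_distr_translate[of c] by simp

lemma integrable_bounded_mult:
  fixes g h :: "'a \<Rightarrow> real"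
  assumes "integrable M g" "h \<in> borel_measurable M" "\<And>x. \<bar>h x\<bar> \<le> C"
  shows "integrable M (\<lambda>x. h x * g x)"
proof (rule Bochner_Integration.integrable_bound)
  show "integrable M (\<lambda>x. C * \<bar>g x\<bar>)" using assms by auto
  show "(\<lambda>x. h x * g x) \<in> borel_measurable M"
    using assms by (auto intro: borel_measurable_integrable)
  show "AE x in M. norm (h x * g x) \<le> norm (C * \<bar>g x\<bar>)"
  proof (rule AE_I2)
    fix x
    have "\<bar>h x * g x\<bar> \<le> C * \<bar>g x\<bar>" by (simp add: abs_mult assms(3) mult_right_mono)
    then show "norm (h x * g x) \<le> norm (C * \<bar>g x\<bar>)" by auto
  qed
qed

lemma integral_mult_difference_quotient_swap:
  fixes f \<phi> :: "'a::euclidean_space \<Rightarrow> real"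
  assumes fm: "f \<in> borel_measurable lborel" and fb: "\<And>x. \<bar>f x\<bar> \<le> M"
    and \<phi>: "integrable lborel \<phi>"
  shows "(\<integral>x. f x * ((\<phi> (x - h) - \<phi> x) / s) \<partial>lborel)
    = (\<integral>x. (f (x + h) - f x) / s * \<phi> x \<partial>lborel)"
proof -
  have \<phi>m: "\<phi> \<in> borel_measurable lborel" using \<phi> by simp
  have "integrable lborel (\<lambda>x. \<phi> (- h + x))" by (rule lborel_integrable_translate[OF \<phi>])
  then have i1: "integrable lborel (\<lambda>x. f x * \<phi> (x - h))"
    using integrable_bounded_mult[OF _ fm fb] by simp
  have i2: "integrable lborel (\<lambda>x. f x * \<phi> x)" by (rule integrable_bounded_mult[OF \<phi> fm fb])
  have i3: "integrable lborel (\<lambda>x. f (x + h) * \<phi> x)"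
    by (rule integrable_bounded_mult[OF \<phi> _ fb]) (use fm in simp)
  have "(\<integral>x. f x * \<phi> (x - h) \<partial>lborel) = (\<integral>x. f (h + x) * \<phi> (h + x - h) \<partial>lborel)"
    by (rule lborel_integral_translate[symmetric]) (use fm \<phi>m in simp)
  then have "(\<integral>x. f x * \<phi> (x - h) \<partial>lborel) = (\<integral>x. f (x + h) * \<phi> x \<partial>lborel)"
    by (simp add: add.commute)
  then have "(\<integral>x. f x * (\<phi> (x - h) - \<phi> x) \<partial>lborel) = (\<integral>x. (f (x + h) - f x) * \<phi> x \<partial>lborel)"
    using i1 i2 i3 by (simp add: right_diff_distrib left_diff_distrib)
  moreover have "(\<integral>x. f x * ((\<phi> (x - h) - \<phi> x) / s) \<partial>lborel)
      = (\<integral>x. f x * (\<phi> (x - h) - \<phi> x) \<partial>lborel) / s"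
    "(\<integral>x. (f (x + h) - f x) / s * \<phi> x \<partial>lborel) = (\<integral>x. (f (x + h) - f x) * \<phi> x \<partial>lborel) / s"
    by (simp_all flip: integral_divide_zero)
  ultimately show ?thesis by simp
qed

section \<open>Derivatives along lines and test functions\<close>

lemma has_real_derivative_along_line:
  fixes \<phi> :: "'a::real_inner \<Rightarrow> real"
  assumes "(\<phi> has_derivative (\<lambda>h. D \<bullet> h)) (at (x + r *\<^sub>R v))"
  shows "((\<lambda>r. \<phi> (x + r *\<^sub>R v)) has_real_derivative D \<bullet> v) (at r within S)"
proof -
  have "((\<lambda>r. x + r *\<^sub>R v) has_derivative (\<lambda>h. h *\<^sub>R v)) (at r within S)"
    by (auto intro!: derivative_eq_intros)
  from has_derivative_in_compose[OF this has_derivative_at_withinI[OF assms]]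
  have "((\<lambda>r. \<phi> (x + r *\<^sub>R v)) has_derivative (\<lambda>h. h * (D \<bullet> v))) (at r within S)"
    by (simp add: o_def)
  moreover have "(\<lambda>h. h * (D \<bullet> v)) = (*) (D \<bullet> v)" by (simp add: fun_eq_iff mult.commute)
  ultimately show ?thesis by (simp add: has_field_derivative_def)
qed

lemma abs_diff_along_line_le:
  fixes f :: "'a::real_normed_vector \<Rightarrow> real"
  assumes "\<And>r. r \<in> {0..t} \<Longrightarrow> ((\<lambda>s. f (x + s *\<^sub>R v)) has_real_derivative D r) (at r within {0..t})"
    and "\<And>r. r \<in> {0..t} \<Longrightarrow> \<bar>D r\<bar> \<le> B" and "0 \<le> t"
  shows "\<bar>f (x + t *\<^sub>R v) - f x\<bar> \<le> B * t"
proof -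
  have "norm ((\<lambda>s. f (x + s *\<^sub>R v)) t - (\<lambda>s. f (x + s *\<^sub>R v)) 0) \<le> B * norm (t - 0)"
    by (rule field_differentiable_bound[where S="{0..t}"]) (use assms in auto)
  then show ?thesis using \<open>0 \<le> t\<close> by simp
qed

lemma diff_along_line_eq_lborel_integral:
  fixes G :: "'a::euclidean_space \<Rightarrow> real"
  assumes Gd: "\<And>x. (G has_derivative (\<lambda>h. DG x \<bullet> h)) (at x)" and DGc: "continuous_on UNIV DG"
    and "a \<le> b"
  shows "G (z + b *\<^sub>R v) - G (z + a *\<^sub>R v)
    = (\<integral>s. indicator {a..b} s * (DG (z + s *\<^sub>R v) \<bullet> v) \<partial>lborel)"
proof -
  have "(\<integral>s. indicator {a..b} s *\<^sub>R (DG (z + s *\<^sub>R v) \<bullet> v) \<partial>lborel)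
      = G (z + b *\<^sub>R v) - G (z + a *\<^sub>R v)"
  proof (rule integral_FTC_atLeastAtMost[OF \<open>a \<le> b\<close>])
    show "((\<lambda>s. G (z + s *\<^sub>R v)) has_vector_derivative DG (z + s *\<^sub>R v) \<bullet> v)
        (at s within {a..b})" for s
      using has_real_derivative_along_line[OF Gd]
      by (simp add: has_real_derivative_iff_has_vector_derivative)
    show "continuous_on {a..b} (\<lambda>s. DG (z + s *\<^sub>R v) \<bullet> v)"
      by (intro continuous_intros continuous_on_compose2[OF DGc]) auto
  qed
  then show ?thesis by simp
qed

lemma test_fun_integrable:
  assumes "test_fun \<phi> D\<phi>"
  shows "integrable lborel \<phi>"
proof -
  define K where "K = closure {x. \<phi> x \<noteq> 0}"
  have "compact K" and "\<And>x. (\<phi> has_derivative (\<lambda>h. D\<phi> x \<bullet> h)) (at x)"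
    using assms unfolding test_fun_def K_def by auto
  then have "integrable lborel (\<lambda>x. indicator K x *\<^sub>R \<phi> x)"
    by (intro borel_integrable_compact continuous_at_imp_continuous_on ballI
        has_derivative_continuous)
  moreover have "(\<lambda>x. indicator K x *\<^sub>R \<phi> x) = \<phi>"
    using closure_subset[of "{x. \<phi> x \<noteq> 0}"] by (intro ext) (auto simp: K_def indicator_def)
  ultimately show ?thesis by simp
qed

lemma test_fun_grad_eq_0:
  assumes "test_fun \<phi> D\<phi>" and x: "x \<notin> closure {x. \<phi> x \<noteq> 0}"
  shows "D\<phi> x = 0"
proof -
  let ?S = "- closure {x. \<phi> x \<noteq> 0}"
  have "(\<phi> has_derivative (\<lambda>h. 0)) (at x)"
  proof (rule has_derivative_transform_within_open[where f="\<lambda>y. 0" and s="?S"])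
    show "open ?S" "x \<in> ?S" using x by auto
    show "0 = \<phi> y" if "y \<in> ?S" for y
      using that closure_subset[of "{x. \<phi> x \<noteq> 0}"] by (cases "\<phi> y = 0") auto
  qed simp
  moreover have "(\<phi> has_derivative (\<lambda>h. D\<phi> x \<bullet> h)) (at x)"
    using assms unfolding test_fun_def by blast
  ultimately have "(\<lambda>h. D\<phi> x \<bullet> h) = (\<lambda>h. 0)" by (rule has_derivative_unique[rotated])
  then have "D\<phi> x \<bullet> D\<phi> x = 0" by (rule fun_cong)
  then show ?thesis by simp
qed

lemma test_fun_grad_bounded:
  assumes "test_fun \<phi> D\<phi>"
  obtains B where "\<And>x. norm (D\<phi> x) \<le> B"
proof -
  let ?S = "closure {x. \<phi> x \<noteq> 0}"
  have "compact ?S" "continuous_on ?S D\<phi>"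
    using assms unfolding test_fun_def by (auto intro: continuous_on_subset)
  then have "bounded (D\<phi> ` ?S)" by (intro compact_imp_bounded compact_continuous_image)
  then obtain B where B: "\<And>x. x \<in> ?S \<Longrightarrow> norm (D\<phi> x) \<le> B" unfolding bounded_iff by auto
  have "norm (D\<phi> x) \<le> max B 0" for x
    using B[of x] test_fun_grad_eq_0[OF assms, of x] by (cases "x \<in> ?S") auto
  then show ?thesis using that by blast
qed

lemma test_fun_difference_bound:
  fixes \<phi> :: "'a::euclidean_space \<Rightarrow> real"
  assumes "test_fun \<phi> D\<phi>"
  obtains B K where "compact K"
    and "\<And>x v t. norm v \<le> 1 \<Longrightarrow> 0 \<le> t \<Longrightarrow> t \<le> 1 \<Longrightarrow>
           \<bar>\<phi> (x + t *\<^sub>R v) - \<phi> x\<bar> \<le> B * t * indicator K x"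
proof -
  define S where "S = closure {x. \<phi> x \<noteq> 0}"
  define K where "K = {a + b | a b. a \<in> S \<and> b \<in> cball (0::'a) 1}"
  have d: "\<And>y. (\<phi> has_derivative (\<lambda>h. D\<phi> y \<bullet> h)) (at y)" and "compact S"
    using assms unfolding test_fun_def S_def by auto
  then have "compact K" unfolding K_def by (intro compact_sums compact_cball)
  obtain B where B: "\<And>y. norm (D\<phi> y) \<le> B" using test_fun_grad_bounded[OF assms] by blast
  have B0: "0 \<le> B" using order_trans[OF norm_ge_zero B] .
  have "\<bar>\<phi> (x + t *\<^sub>R v) - \<phi> x\<bar> \<le> B * t * indicator K x"
    if v: "norm v \<le> 1" and t: "0 \<le> t" "t \<le> 1" for x v t
  proof (cases "x \<in> K")
    case True
    have "\<bar>D\<phi> y \<bullet> v\<bar> \<le> B" for y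
      using order_trans[OF Cauchy_Schwarz_ineq2 mult_mono[OF B v B0 norm_ge_zero]] by simp
    then have "\<bar>\<phi> (x + t *\<^sub>R v) - \<phi> x\<bar> \<le> B * t"
      by (rule abs_diff_along_line_le[where D="\<lambda>r. D\<phi> (x + r *\<^sub>R v) \<bullet> v",
          OF has_real_derivative_along_line[OF d]]) (use t in auto)
    then show ?thesis using True by simp
  next
    case False
    have "norm (- (t *\<^sub>R v)) \<le> 1" "norm (0::'a) \<le> 1" using v t by (auto intro: mult_le_one)
    then have thicken: "y + 0 \<in> K" "y + - (t *\<^sub>R v) \<in> K" if "y \<in> S" for y
      using that unfolding K_def mem_cball_0 by blast+
    have "x \<notin> S" using thicken(1)[of x] False by auto
    moreover have "x + t *\<^sub>R v \<notin> S" using thicken(2)[of "x + t *\<^sub>R v"] False by auto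
    moreover have "\<phi> y = 0" if "y \<notin> S" for y
      using that closure_subset[of "{x. \<phi> x \<noteq> 0}"] unfolding S_def by blast
    ultimately show ?thesis using False by simp
  qed
  with \<open>compact K\<close> show ?thesis using that by blast
qed

section \<open>Weak gradients of functions with bounded continuous partial derivatives\<close>

lemma tendsto_integral_mult_test_fun_difference_quotient:
  fixes f \<phi> :: "'a::euclidean_space \<Rightarrow> real"
  assumes tf: "test_fun \<phi> D\<phi>" and fm: "f \<in> borel_measurable lborel" and fb: "\<And>x. \<bar>f x\<bar> \<le> M"
    and t: "filterlim t (at 0) sequentially" "\<And>n. t n \<in> {0<..1}" and v: "norm v \<le> 1"
  shows "(\<lambda>n. \<integral>x. f x * ((\<phi> (x + t n *\<^sub>R v) - \<phi> x) / t n) \<partial>lborel)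
           \<longlonglongrightarrow> (\<integral>x. f x * (D\<phi> x \<bullet> v) \<partial>lborel)"
proof -
  obtain B K where K: "compact K" and bound: "\<And>x s. 0 \<le> s \<Longrightarrow> s \<le> 1 \<Longrightarrow>
      \<bar>\<phi> (x + s *\<^sub>R v) - \<phi> x\<bar> \<le> B * s * indicator K x"
    using test_fun_difference_bound[OF tf] v by metis
  have d: "\<And>y. (\<phi> has_derivative (\<lambda>h. D\<phi> y \<bullet> h)) (at y)" and Dc: "continuous_on UNIV D\<phi>"
    using tf unfolding test_fun_def by auto
  have \<phi>m: "\<phi> \<in> borel_measurable borel"
    by (intro borel_measurable_continuous_onI continuous_at_imp_continuous_on ballI
        has_derivative_continuous[OF d])
  have Dm: "D\<phi> \<in> borel_measurable borel" by (rule borel_measurable_continuous_onI[OF Dc])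
  show ?thesis
  proof (rule integral_dominated_convergence[where w="\<lambda>x. M * B * indicator K x"])
    show "(\<lambda>x. f x * (D\<phi> x \<bullet> v)) \<in> borel_measurable lborel" using fm Dm by simp
    show "(\<lambda>x. f x * ((\<phi> (x + t n *\<^sub>R v) - \<phi> x) / t n)) \<in> borel_measurable lborel" for n
      using fm \<phi>m by simp
    show "integrable lborel (\<lambda>x. M * B * indicator K x)"
      using K by (intro integrable_mult_right integrable_real_indicator emeasure_compact_finite)
        (auto intro: borel_compact)
    show "AE x in lborel. (\<lambda>n. f x * ((\<phi> (x + t n *\<^sub>R v) - \<phi> x) / t n)) \<longlonglongrightarrow> f x * (D\<phi> x \<bullet> v)"
    proof (rule AE_I2)
      fix x
      have "((\<lambda>r. \<phi> (x + r *\<^sub>R v)) has_real_derivative D\<phi> x \<bullet> v) (at 0)"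
        by (rule has_real_derivative_along_line) (simp add: d)
      then have "((\<lambda>r. (\<phi> (x + r *\<^sub>R v) - \<phi> (x + 0 *\<^sub>R v)) / (r - 0)) \<longlongrightarrow> D\<phi> x \<bullet> v) (at 0)"
        unfolding has_field_derivative_iff .
      from filterlim_compose[OF this t(1)]
      show "(\<lambda>n. f x * ((\<phi> (x + t n *\<^sub>R v) - \<phi> x) / t n)) \<longlonglongrightarrow> f x * (D\<phi> x \<bullet> v)"
        by (intro tendsto_mult_left) simp
    qed
    show "AE x in lborel. norm (f x * ((\<phi> (x + t n *\<^sub>R v) - \<phi> x) / t n)) \<le> M * B * indicator K x"
      for n
    proof (rule AE_I2)
      fix x
      have tn: "0 < t n" "t n \<le> 1" using t(2)[of n] by auto
      have "\<bar>\<phi> (x + t n *\<^sub>R v) - \<phi> x\<bar> / t n \<le> B * indicator K x"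
        using bound[of "t n" x] tn by (simp add: divide_le_eq mult_ac)
      then have "\<bar>f x\<bar> * (\<bar>\<phi> (x + t n *\<^sub>R v) - \<phi> x\<bar> / t n) \<le> M * (B * indicator K x)"
        using fb[of x] tn by (intro mult_mono) auto
      then show "norm (f x * ((\<phi> (x + t n *\<^sub>R v) - \<phi> x) / t n)) \<le> M * B * indicator K x"
        using tn by (simp add: abs_mult mult.assoc)
    qed
  qed
qed

lemma tendsto_integral_difference_quotient_mult:
  fixes f \<phi> D :: "'a::euclidean_space \<Rightarrow> real"
  assumes fm: "f \<in> borel_measurable lborel" and \<phi>: "integrable lborel \<phi>"
    and df: "\<And>x. ((\<lambda>s. f (x + s *\<^sub>R v)) has_real_derivative D x) (at 0)"
    and Dm: "D \<in> borel_measurable lborel" and Db: "\<And>x. \<bar>D x\<bar> \<le> L"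
    and t: "filterlim t (at 0) sequentially" "\<And>n. 0 < t n"
  shows "(\<lambda>n. \<integral>x. (f (x + t n *\<^sub>R v) - f x) / t n * \<phi> x \<partial>lborel) \<longlonglongrightarrow> (\<integral>x. D x * \<phi> x \<partial>lborel)"
proof (rule integral_dominated_convergence[where w="\<lambda>x. L * \<bar>\<phi> x\<bar>"])
  show "(\<lambda>x. D x * \<phi> x) \<in> borel_measurable lborel" using Dm \<phi> by simp
  show "(\<lambda>x. (f (x + t n *\<^sub>R v) - f x) / t n * \<phi> x) \<in> borel_measurable lborel" for n
    using fm \<phi> by simp
  show "integrable lborel (\<lambda>x. L * \<bar>\<phi> x\<bar>)" using \<phi> by simp
  show "AE x in lborel. (\<lambda>n. (f (x + t n *\<^sub>R v) - f x) / t n * \<phi> x) \<longlonglongrightarrow> D x * \<phi> x"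
  proof (rule AE_I2)
    fix x
    have "((\<lambda>s. (f (x + s *\<^sub>R v) - f (x + 0 *\<^sub>R v)) / (s - 0)) \<longlongrightarrow> D x) (at 0)"
      using df[of x] unfolding has_field_derivative_iff .
    from filterlim_compose[OF this t(1)]
    show "(\<lambda>n. (f (x + t n *\<^sub>R v) - f x) / t n * \<phi> x) \<longlonglongrightarrow> D x * \<phi> x"
      by (intro tendsto_mult_right) simp
  qed
  show "AE x in lborel. norm ((f (x + t n *\<^sub>R v) - f x) / t n * \<phi> x) \<le> L * \<bar>\<phi> x\<bar>" for n
  proof (rule AE_I2)
    fix x
    have "\<bar>f (x + t n *\<^sub>R v) - f x\<bar> \<le> L * t n"
    proof (rule abs_diff_along_line_le[where D="\<lambda>r. D (x + r *\<^sub>R v)"])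
      show "((\<lambda>s. f (x + s *\<^sub>R v)) has_real_derivative D (x + r *\<^sub>R v))
          (at r within {0..t n})" for r
        using df[of "x + r *\<^sub>R v"] DERIV_shift[of "\<lambda>s. f (x + s *\<^sub>R v)" _ 0 r]
        by (simp add: algebra_simps has_field_derivative_at_within)
    qed (use Db t(2)[of n] in auto)
    then have "\<bar>f (x + t n *\<^sub>R v) - f x\<bar> / \<bar>t n\<bar> \<le> L"
      using t(2)[of n] by (simp add: divide_le_eq)
    then have "\<bar>f (x + t n *\<^sub>R v) - f x\<bar> / \<bar>t n\<bar> * \<bar>\<phi> x\<bar> \<le> L * \<bar>\<phi> x\<bar>"
      by (rule mult_right_mono) simp
    then show "norm ((f (x + t n *\<^sub>R v) - f x) / t n * \<phi> x) \<le> L * \<bar>\<phi> x\<bar>"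
      by (simp add: abs_mult abs_divide)
  qed
qed

definition has_bounded_continuous_partials :: "('a::euclidean_space \<Rightarrow> real) \<Rightarrow> ('a \<Rightarrow> 'a) \<Rightarrow> bool"
  where "has_bounded_continuous_partials f w \<longleftrightarrow>
    continuous_on UNIV f \<and> continuous_on UNIV w \<and> bounded (range f) \<and> bounded (range w) \<and>
    (\<forall>x. \<forall>i\<in>Basis. ((\<lambda>t. f (x + t *\<^sub>R i)) has_real_derivative w x \<bullet> i) (at 0))"

lemma weak_grad_if_bounded_continuous_partials:
  fixes f :: "'a::euclidean_space \<Rightarrow> real"
  assumes "has_bounded_continuous_partials f w"
  shows "weak_grad f w"
proof -
  have fc: "continuous_on UNIV f" and wc: "continuous_on UNIV w"
    and partial: "\<And>x i. i \<in> Basis \<Longrightarrow> ((\<lambda>t. f (x + t *\<^sub>R i)) has_real_derivative w x \<bullet> i) (at 0)"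
    using assms unfolding has_bounded_continuous_partials_def by auto
  obtain M where M: "\<And>x. \<bar>f x\<bar> \<le> M"
    using assms unfolding has_bounded_continuous_partials_def bounded_iff by auto
  obtain L where L: "\<And>x. norm (w x) \<le> L"
    using assms unfolding has_bounded_continuous_partials_def bounded_iff by auto
  have fm: "f \<in> borel_measurable lborel" and wm: "w \<in> borel_measurable lborel"
    using borel_measurable_continuous_onI[OF fc] borel_measurable_continuous_onI[OF wc] by simp_all
  show ?thesis
    unfolding weak_grad_def
  proof (intro conjI allI impI ballI fm wm)
    fix K :: "'a set" assume K: "compact K"
    show "set_integrable lborel K f"
      unfolding set_integrable_def
        by (rule borel_integrable_compact[OF K continuous_on_subset[OF fc]]) simp
    show "set_integrable lborel K (\<lambda>x. w x \<bullet> i)" for i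
      unfolding set_integrable_def
      by (rule borel_integrable_compact[OF K])
        (intro continuous_intros continuous_on_subset[OF wc]; simp)
  next
    fix \<phi> :: "'a \<Rightarrow> real" and D\<phi> :: "'a \<Rightarrow> 'a" and i :: 'a
      assume tf: "test_fun \<phi> D\<phi>" and i: "i \<in> Basis"
    define t where "t n = 1 / real (Suc n)" for n
    have t_lim: "filterlim t (at 0) sequentially"
      unfolding t_def filterlim_at
      using LIMSEQ_Suc[OF lim_const_over_n[of 1]] by (simp add: always_eventually)
    have lim_test: "(\<lambda>n. \<integral>x. f x * ((\<phi> (x + t n *\<^sub>R - i) - \<phi> x) / t n) \<partial>lborel)
        \<longlonglongrightarrow> (\<integral>x. f x * (D\<phi> x \<bullet> - i) \<partial>lborel)"
      using i by (intro tendsto_integral_mult_test_fun_difference_quotient[OF tf fm M t_lim])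
        (auto simp: t_def)
    have lim_f: "(\<lambda>n. \<integral>x. (f (x + t n *\<^sub>R i) - f x) / t n * \<phi> x \<partial>lborel)
        \<longlonglongrightarrow> (\<integral>x. (w x \<bullet> i) * \<phi> x \<partial>lborel)"
    proof (rule tendsto_integral_difference_quotient_mult[OF fm test_fun_integrable[OF tf]
          partial[OF i] _ _ t_lim])
      show "0 < t n" for n by (simp add: t_def)
      show "(\<lambda>x. w x \<bullet> i) \<in> borel_measurable lborel" using wm by simp
      show "\<bar>w x \<bullet> i\<bar> \<le> L" for x using Basis_le_norm[OF i, of "w x"] L[of x] by simp
    qed
    have by_parts: "(\<integral>x. f x * ((\<phi> (x + s *\<^sub>R - i) - \<phi> x) / s) \<partial>lborel)
        = (\<integral>x. (f (x + s *\<^sub>R i) - f x) / s * \<phi> x \<partial>lborel)" for s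
      using integral_mult_difference_quotient_swap[OF fm M test_fun_integrable[OF tf]
        , of "s *\<^sub>R i" s]
      by simp
    have "(\<integral>x. f x * (D\<phi> x \<bullet> - i) \<partial>lborel) = (\<integral>x. (w x \<bullet> i) * \<phi> x \<partial>lborel)"
      using lim_test lim_f unfolding by_parts by (rule LIMSEQ_unique)
    then show "(\<integral>x. f x * (D\<phi> x \<bullet> i) \<partial>lborel) = - (\<integral>x. (w x \<bullet> i) * \<phi> x \<partial>lborel)"
      by simp
  qed
qed

lemma weak_grad_cong_AE:
  fixes f g :: "'a::euclidean_space \<Rightarrow> real"
  assumes wg: "weak_grad f w" and gm: "g \<in> borel_measurable lborel"
    and ae: "AE x in lborel. f x = g x"
  shows "weak_grad g w"
proof -
  have fm: "f \<in> borel_measurable lborel" using wg unfolding weak_grad_def by simp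
  show ?thesis
    unfolding weak_grad_def
  proof (intro conjI allI impI ballI gm)
    show "w \<in> borel_measurable lborel" using wg unfolding weak_grad_def by simp
  next
    fix K :: "'a set" assume K: "compact K"
    have "set_integrable lborel K f" using wg K unfolding weak_grad_def by simp
    moreover have "integrable lborel (\<lambda>x. indicator K x *\<^sub>R f x)
        = integrable lborel (\<lambda>x. indicator K x *\<^sub>R g x)"
    proof (rule integrable_cong_AE)
      have "(indicator K :: 'a \<Rightarrow> real) \<in> borel_measurable lborel"
        using borel_measurable_indicator[OF borel_compact[OF K]] by simp
      then show "(\<lambda>x. indicator K x *\<^sub>R f x) \<in> borel_measurable lborel"
        "(\<lambda>x. indicator K x *\<^sub>R g x) \<in> borel_measurable lborel"
        using fm gm by (simp_all add: borel_measurable_times)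
      show "AE x in lborel. indicator K x *\<^sub>R f x = indicator K x *\<^sub>R g x"
        using ae by eventually_elim simp
    qed
    ultimately show "set_integrable lborel K g" unfolding set_integrable_def by simp
  next
    fix K :: "'a set" and i :: 'a assume "compact K" "i \<in> Basis"
    then show "set_integrable lborel K (\<lambda>x. w x \<bullet> i)" using wg unfolding weak_grad_def by simp
  next
    fix \<phi> :: "'a \<Rightarrow> real" and D\<phi> :: "'a \<Rightarrow> 'a" and i :: 'a
    assume tf: "test_fun \<phi> D\<phi>" and i: "i \<in> Basis"
    have "continuous_on UNIV D\<phi>" using tf unfolding test_fun_def by simp
    then have "(\<lambda>x. D\<phi> x \<bullet> i) \<in> borel_measurable lborel"
      using borel_measurable_continuous_onI[of "\<lambda>x. D\<phi> x \<bullet> i"] by (simp add: continuous_intros)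
    then have "(\<integral>x. g x * (D\<phi> x \<bullet> i) \<partial>lborel) = (\<integral>x. f x * (D\<phi> x \<bullet> i) \<partial>lborel)"
      using fm gm ae by (intro integral_cong_AE) auto
    also have "\<dots> = - (\<integral>x. (w x \<bullet> i) * \<phi> x \<partial>lborel)" using wg tf i unfolding weak_grad_def by blast
    finally show "(\<integral>x. g x * (D\<phi> x \<bullet> i) \<partial>lborel) = - (\<integral>x. (w x \<bullet> i) * \<phi> x \<partial>lborel)" .
  qed
qed

lemma has_bounded_continuous_partials_comp:
  fixes f :: "'a::euclidean_space \<Rightarrow> real"
  assumes f: "has_bounded_continuous_partials f w"
    and F: "\<And>s. (F has_real_derivative F' s) (at s)" and F'c: "continuous_on UNIV F'"
  shows "has_bounded_continuous_partials (\<lambda>x. F (f x)) (\<lambda>x. F' (f x) *\<^sub>R w x)"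
proof -
  have fc: "continuous_on UNIV f" and wc: "continuous_on UNIV w" and "bounded (range f)"
    and "bounded (range w)"
    and partial: "\<And>x i. i \<in> Basis \<Longrightarrow> ((\<lambda>t. f (x + t *\<^sub>R i)) has_real_derivative w x \<bullet> i) (at 0)"
    using f unfolding has_bounded_continuous_partials_def by auto
  have Fc: "continuous_on UNIV F"
    by (intro continuous_at_imp_continuous_on ballI DERIV_isCont[OF F])
  have C: "compact (closure (range f))" by (rule compact_closure[THEN iffD2]) fact
  have "bounded (F ` closure (range f))" "bounded (F' ` closure (range f))"
    using Fc F'c C by (auto intro!: compact_imp_bounded compact_continuous_image
        intro: continuous_on_subset)
  moreover have "range (\<lambda>x. F (f x)) \<subseteq> F ` closure (range f)"
    "range (\<lambda>x. F' (f x)) \<subseteq> F' ` closure (range f)"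
    using closure_subset[of "range f"] by auto
  ultimately have FB: "bounded (range (\<lambda>x. F (f x)))" and "bounded (range (\<lambda>x. F' (f x)))"
    by (auto intro: bounded_subset)
  then obtain B1 where B1: "\<And>x. \<bar>F' (f x)\<bar> \<le> B1" unfolding bounded_iff by auto
  obtain B2 where B2: "\<And>x. norm (w x) \<le> B2" using \<open>bounded (range w)\<close> unfolding bounded_iff by auto
  have "norm (F' (f x) *\<^sub>R w x) \<le> B1 * B2" for x
    using B1[of x] B2[of x] by (simp add: mult_mono)
  then have "bounded (range (\<lambda>x. F' (f x) *\<^sub>R w x))" unfolding bounded_iff by blast
  moreover have "((\<lambda>t. F (f (x + t *\<^sub>R i))) has_real_derivative (F' (f x) *\<^sub>R w x) \<bullet> i) (at 0)"
    if "i \<in> Basis" for x i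
    using DERIV_chain2[OF F partial[OF that, of x]] by simp
  moreover have "continuous_on UNIV (\<lambda>x. F (f x))" "continuous_on UNIV (\<lambda>x. F' (f x))"
    using continuous_on_compose2[OF Fc fc] continuous_on_compose2[OF F'c fc] by auto
  ultimately show ?thesis
    unfolding has_bounded_continuous_partials_def using FB wc by (auto intro: continuous_intros)
qed

lemma power2_max_0_has_real_derivative:
  "((\<lambda>s::real. (max s 0)\<^sup>2) has_real_derivative 2 * max a 0) (at a)"
proof (cases a "0::real" rule: linorder_cases)
  case less
  have "eventually (\<lambda>s. s < 0) (nhds a)"
    using order_tendstoD(2)[OF filterlim_ident less] .
  then have "eventually (\<lambda>s. (max s 0)\<^sup>2 = 0) (nhds a)" by eventually_elim simp
  then have "DERIV (\<lambda>s. (max s 0)\<^sup>2) a :> 0 \<longleftrightarrow> DERIV (\<lambda>s. 0) a :> 0"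
    by (intro DERIV_cong_ev) simp_all
  then show ?thesis using less by simp
next
  case greater
  have "eventually (\<lambda>s. 0 < s) (nhds a)"
    using order_tendstoD(1)[OF filterlim_ident greater] .
  then have "eventually (\<lambda>s. (max s 0)\<^sup>2 = s\<^sup>2) (nhds a)" by eventually_elim simp
  then have "DERIV (\<lambda>s. (max s 0)\<^sup>2) a :> 2 * a \<longleftrightarrow> DERIV (\<lambda>s. s\<^sup>2) a :> 2 * a"
    by (intro DERIV_cong_ev) simp_all
  then show ?thesis using greater by (auto intro!: derivative_eq_intros)
next
  case equal
  have "((\<lambda>s. max s 0) \<longlongrightarrow> max 0 0) (at (0::real))" by (intro tendsto_intros)
  moreover have "eventually (\<lambda>s. max s 0 = ((max s 0)\<^sup>2 - (max 0 0)\<^sup>2) / (s - 0)) (at (0::real))"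
    by (auto simp: eventually_at_filter max_def power2_eq_square)
  ultimately have "((\<lambda>s. ((max s 0)\<^sup>2 - (max 0 0)\<^sup>2) / (s - 0)) \<longlongrightarrow> 0) (at (0::real))"
    by (simp add: tendsto_cong)
  then show ?thesis using equal unfolding has_field_derivative_iff by simp
qed

lemma weak_grad_half_square_if_AE_positive_part:
  fixes \<rho> u :: "'a::euclidean_space \<Rightarrow> real"
  assumes u: "has_bounded_continuous_partials u v" and \<epsilon>: "0 < \<epsilon>"
    and \<rho>: "\<rho> \<in> borel_measurable lborel" and ae: "AE x in lborel. \<epsilon> * \<rho> x = max (u x + c) 0"
  shows "weak_grad (\<lambda>x. (\<rho> x)\<^sup>2 / 2) (\<lambda>x. (max (u x + c) 0 / \<epsilon>\<^sup>2) *\<^sub>R v x)"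
proof (rule weak_grad_cong_AE)
  have "((\<lambda>s. (max (s + c) 0)\<^sup>2 / (2 * \<epsilon>\<^sup>2)) has_real_derivative max (s + c) 0 / \<epsilon>\<^sup>2) (at s)" for s
  proof -
    have "((\<lambda>s. s + c) has_real_derivative 1) (at s)" by (auto intro!: derivative_eq_intros)
    from DERIV_cdivide[OF DERIV_chain2[OF power2_max_0_has_real_derivative this], of "2 * \<epsilon>\<^sup>2"]
    show ?thesis using \<epsilon> by simp
  qed
  then have "has_bounded_continuous_partials (\<lambda>x. (max (u x + c) 0)\<^sup>2 / (2 * \<epsilon>\<^sup>2))
      (\<lambda>x. (max (u x + c) 0 / \<epsilon>\<^sup>2) *\<^sub>R v x)"
    by (rule has_bounded_continuous_partials_comp[OF u]) (intro continuous_intros; use \<epsilon> in simp)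
  then show "weak_grad (\<lambda>x. (max (u x + c) 0)\<^sup>2 / (2 * \<epsilon>\<^sup>2)) (\<lambda>x. (max (u x + c) 0 / \<epsilon>\<^sup>2) *\<^sub>R v x)"
    by (rule weak_grad_if_bounded_continuous_partials)
  show "(\<lambda>x. (\<rho> x)\<^sup>2 / 2) \<in> borel_measurable lborel" using \<rho> by simp
  show "AE x in lborel. (max (u x + c) 0)\<^sup>2 / (2 * \<epsilon>\<^sup>2) = (\<rho> x)\<^sup>2 / 2"
    using ae
  proof eventually_elim
    case (elim x)
    show ?case unfolding elim[symmetric] using \<epsilon> by (simp add: power_mult_distrib field_simps)
  qed
qed

section \<open>Convolution\<close>

lemma integrable_conv_integrand:
  fixes K h :: "'a::euclidean_space \<Rightarrow> real"
  assumes "K \<in> borel_measurable borel" and "\<And>x. \<bar>K x\<bar> \<le> SK" and "integrable lborel h"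
  shows "integrable lborel (\<lambda>y. K (x - y) * h y)"
  by (rule integrable_bounded_mult[OF assms(3)]) (use assms(1,2) in auto)

lemma abs_conv_le:
  fixes K h :: "'a::euclidean_space \<Rightarrow> real"
  assumes Km: "K \<in> borel_measurable borel" and Kb: "\<And>x. \<bar>K x\<bar> \<le> SK" and h: "integrable lborel h"
  shows "\<bar>conv K h x\<bar> \<le> SK * (\<integral>y. \<bar>h y\<bar> \<partial>lborel)"
proof -
  have "\<bar>conv K h x\<bar> \<le> (\<integral>y. SK * \<bar>h y\<bar> \<partial>lborel)"
    unfolding conv_def
  proof (rule integral_abs_bound_integral)
    show "integrable lborel (\<lambda>y. K (x - y) * h y)" by (rule integrable_conv_integrand[OF Km Kb h])
    show "integrable lborel (\<lambda>y. SK * \<bar>h y\<bar>)" using h by simp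
    show "\<bar>K (x - y) * h y\<bar> \<le> SK * \<bar>h y\<bar>" for y by (simp add: abs_mult Kb mult_right_mono)
  qed
  then show ?thesis by simp
qed

lemma borel_measurable_conv [measurable]:
  fixes K h :: "'a::euclidean_space \<Rightarrow> real"
  assumes [measurable]: "K \<in> borel_measurable borel" "h \<in> borel_measurable lborel"
  shows "conv K h \<in> borel_measurable borel"
proof -
  have "(\<lambda>x. \<integral>y. K (x - y) * h y \<partial>lborel) \<in> borel_measurable lborel" by measurable
  then show ?thesis unfolding conv_def[abs_def] by simp
qed

lemma conv_commute:
  fixes K h :: "'a::euclidean_space \<Rightarrow> real"
  assumes "K \<in> borel_measurable borel" "h \<in> borel_measurable borel"
  shows "conv K h x = conv h K x"
proof -
  have "conv K h x = (\<integral>y. K (x - (x - y)) * h (x - y) \<partial>lborel)"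
    unfolding conv_def by (rule lborel_integral_reflect[symmetric]) (use assms in simp)
  then show ?thesis unfolding conv_def by (simp add: mult.commute)
qed

lemma conv_cong_AE:
  fixes K h1 h2 :: "'a::euclidean_space \<Rightarrow> real"
  assumes "K \<in> borel_measurable borel" "h1 \<in> borel_measurable lborel" "h2 \<in> borel_measurable lborel"
    and "AE y in lborel. h1 y = h2 y"
  shows "conv K h1 = conv K h2"
  unfolding conv_def[abs_def] using assms by (intro ext integral_cong_AE) auto

lemma continuous_on_conv:
  fixes K h :: "'a::euclidean_space \<Rightarrow> real"
  assumes Kc: "continuous_on UNIV K" and Kb: "\<And>x. \<bar>K x\<bar> \<le> SK" and h: "integrable lborel h"
  shows "continuous_on UNIV (conv K h)"
proof -
  have Km: "K \<in> borel_measurable borel" by (rule borel_measurable_continuous_onI[OF Kc])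
  have "continuous (at x) (conv K h)" for x
  proof (rule continuous_at_sequentiallyI)
    fix z assume z: "z \<longlonglongrightarrow> x"
    show "(\<lambda>n. conv K h (z n)) \<longlonglongrightarrow> conv K h x"
      unfolding conv_def
    proof (rule integral_dominated_convergence[where w="\<lambda>y. SK * \<bar>h y\<bar>"])
      show "(\<lambda>y. K (x - y) * h y) \<in> borel_measurable lborel"
        "(\<lambda>y. K (z n - y) * h y) \<in> borel_measurable lborel" for n
        using integrable_conv_integrand[OF Km Kb h] by simp_all
      show "integrable lborel (\<lambda>y. SK * \<bar>h y\<bar>)" using h by simp
      show "AE y in lborel. (\<lambda>n. K (z n - y) * h y) \<longlonglongrightarrow> K (x - y) * h y"
      proof (rule AE_I2)
        fix y
        have "(\<lambda>n. z n - y) \<longlonglongrightarrow> x - y" using z by (intro tendsto_intros)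
        moreover have "isCont K (x - y)" using Kc by (simp add: continuous_on_eq_continuous_at)
        ultimately have "(\<lambda>n. K (z n - y)) \<longlonglongrightarrow> K (x - y)"
          by (rule isCont_tendsto_compose[rotated])
        then show "(\<lambda>n. K (z n - y) * h y) \<longlonglongrightarrow> K (x - y) * h y" by (intro tendsto_intros)
      qed
      show "AE y in lborel. norm (K (z n - y) * h y) \<le> SK * \<bar>h y\<bar>" for n
        by (rule AE_I2) (simp add: abs_mult Kb mult_right_mono)
    qed
  qed
  then show ?thesis by (simp add: continuous_on_eq_continuous_at)
qed

lemma conv_linear:
  fixes K h1 h2 :: "'a::euclidean_space \<Rightarrow> real"
  assumes Km: "K \<in> borel_measurable borel" and Kb: "\<And>x. \<bar>K x\<bar> \<le> SK"
    and h1: "integrable lborel h1" and h2: "integrable lborel h2"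
  shows "conv K (\<lambda>y. a * h1 y + b * h2 y) x = a * conv K h1 x + b * conv K h2 x"
proof -
  have "conv K (\<lambda>y. a * h1 y + b * h2 y) x
      = (\<integral>y. a * (K (x - y) * h1 y) + b * (K (x - y) * h2 y) \<partial>lborel)"
    unfolding conv_def by (rule Bochner_Integration.integral_cong) (auto simp: algebra_simps)
  also have "\<dots> = a * conv K h1 x + b * conv K h2 x"
    unfolding conv_def
    using integrable_conv_integrand[OF Km Kb h1] integrable_conv_integrand[OF Km Kb h2] by simp
  finally show ?thesis .
qed

lemma integrable_pair_conv_integrand:
  fixes K f h :: "'a::euclidean_space \<Rightarrow> real"
  assumes Km[measurable]: "K \<in> borel_measurable borel" and Kb: "\<And>x. \<bar>K x\<bar> \<le> SK"
    and f: "integrable lborel f" and h: "integrable lborel h"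
  shows "integrable (lborel \<Otimes>\<^sub>M lborel) (\<lambda>(x, y). f x * K (x - y) * h y)"
proof (rule lborel_pair.Fubini_integrable)
  have [measurable]: "f \<in> borel_measurable lborel" "h \<in> borel_measurable lborel"
    using f h by auto
  let ?F = "\<lambda>x y. f x * K (x - y) * h y"
  show "(\<lambda>(x, y). ?F x y) \<in> borel_measurable (lborel \<Otimes>\<^sub>M lborel)" by measurable
  show "AE x in lborel. integrable lborel (\<lambda>y. case (x, y) of (x, y) \<Rightarrow> ?F x y)"
    using integrable_mult_right[OF integrable_conv_integrand[OF Km Kb h], of "f x" for x]
    by (simp add: mult.assoc)
  have SK0: "0 \<le> SK" using Kb[of 0] by simp
  have "integrable lborel (\<lambda>x. \<integral>y. norm (?F x y) \<partial>lborel)"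
  proof (rule Bochner_Integration.integrable_bound)
    show "integrable lborel (\<lambda>x. \<bar>f x\<bar> * (SK * (\<integral>y. \<bar>h y\<bar> \<partial>lborel)))" using f by simp
    show "(\<lambda>x. \<integral>y. norm (?F x y) \<partial>lborel) \<in> borel_measurable lborel" by measurable
    show "AE x in lborel. norm (\<integral>y. norm (?F x y) \<partial>lborel)
        \<le> norm (\<bar>f x\<bar> * (SK * (\<integral>y. \<bar>h y\<bar> \<partial>lborel)))"
    proof (rule AE_I2)
      fix x
      have "(\<integral>y. norm (?F x y) \<partial>lborel) \<le> (\<integral>y. \<bar>f x\<bar> * SK * \<bar>h y\<bar> \<partial>lborel)"
      proof (rule integral_mono)
        show "integrable lborel (\<lambda>y. norm (?F x y))"
          using integrable_mult_right[OF integrable_norm[OF integrable_conv_integrand[OF Km Kb h]],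
              of "\<bar>f x\<bar>" x]
          by (simp add: abs_mult mult.assoc)
        show "integrable lborel (\<lambda>y. \<bar>f x\<bar> * SK * \<bar>h y\<bar>)" using h by simp
        show "norm (?F x y) \<le> \<bar>f x\<bar> * SK * \<bar>h y\<bar>" for y
          by (simp add: abs_mult Kb mult_left_mono mult_right_mono)
      qed
      then show "norm (\<integral>y. norm (?F x y) \<partial>lborel) \<le> norm (\<bar>f x\<bar> * (SK * (\<integral>y. \<bar>h y\<bar> \<partial>lborel)))"
        using SK0 by (simp add: abs_mult mult.assoc)
    qed
  qed
  then show "integrable lborel (\<lambda>x. \<integral>y. norm (case (x, y) of (x, y) \<Rightarrow> ?F x y) \<partial>lborel)" by simp
qed

lemma integral_mult_conv_even_kernel:
  fixes K f h :: "'a::euclidean_space \<Rightarrow> real"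
  assumes Km: "K \<in> borel_measurable borel" and Kb: "\<And>x. \<bar>K x\<bar> \<le> SK"
    and Ks: "\<And>z. K (- z) = K z"
    and f: "integrable lborel f" and h: "integrable lborel h"
  shows "(\<integral>x. f x * conv K h x \<partial>lborel) = (\<integral>x. h x * conv K f x \<partial>lborel)"
proof -
  let ?F = "\<lambda>x y. f x * K (x - y) * h y"
  have "(\<integral>x. f x * conv K h x \<partial>lborel) = (\<integral>x. \<integral>y. ?F x y \<partial>lborel \<partial>lborel)"
    unfolding conv_def by (simp add: mult.assoc)
  also have "\<dots> = (\<integral>y. \<integral>x. ?F x y \<partial>lborel \<partial>lborel)"
    using lborel_pair.Fubini_integral[OF integrable_pair_conv_integrand[OF Km Kb f h]] by simp
  also have "\<dots> = (\<integral>y. h y * conv K f y \<partial>lborel)"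
  proof (rule Bochner_Integration.integral_cong[OF refl])
    fix y
    have "K (x - y) = K (y - x)" for x using Ks[of "y - x"] by simp
    then show "(\<integral>x. ?F x y \<partial>lborel) = h y * conv K f y"
      unfolding conv_def by (simp add: algebra_simps flip: integral_mult_right_zero)
  qed
  finally show ?thesis .
qed

lemma integrable_pair_line_conv_integrand:
  fixes K r :: "'a::euclidean_space \<Rightarrow> real"
  assumes K: "integrable lborel K" and rm: "r \<in> borel_measurable borel" and rb: "\<And>y. \<bar>r y\<bar> \<le> M"
  shows "integrable (lborel \<Otimes>\<^sub>M lborel) (\<lambda>(s, y). indicator {a..b} s * K (x + s *\<^sub>R v - y) * r y)"
proof -
  let ?f = "\<lambda>s y. indicator {a..b} s * K (x + s *\<^sub>R v - y) * r y"
  have [measurable]: "K \<in> borel_measurable borel" "r \<in> borel_measurable borel" using K rm by auto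
  have M0: "0 \<le> M" using rb[of 0] by simp
  have K_reflect: "integrable lborel (\<lambda>y. K (X - y))" for X
    by (rule lborel_integrable_reflect[OF K])
  have abs_K_reflect: "(\<integral>y. \<bar>K (X - y)\<bar> \<partial>lborel) = (\<integral>y. \<bar>K y\<bar> \<partial>lborel)" for X
    by (rule lborel_integral_reflect[where f="\<lambda>y. \<bar>K y\<bar>"]) simp
  have f_s: "integrable lborel (?f s)" for s
    using integrable_bounded_mult[OF K_reflect[of "x + s *\<^sub>R v"]
        , of "\<lambda>y. indicator {a..b} s * r y" M]
      rb M0 by (auto simp: indicator_def ac_simps)
  show ?thesis
  proof (rule lborel_pair.Fubini_integrable)
    show "(\<lambda>(s, y). ?f s y) \<in> borel_measurable (lborel \<Otimes>\<^sub>M lborel)" by measurable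
    show "AE s in lborel. integrable lborel (\<lambda>y. case (s, y) of (s, y) \<Rightarrow> ?f s y)" using f_s by simp
    have "integrable lborel (\<lambda>s. \<integral>y. norm (?f s y) \<partial>lborel)"
    proof (rule Bochner_Integration.integrable_bound)
      show "integrable lborel (\<lambda>s. indicator {a..b} s * (M * (\<integral>y. \<bar>K y\<bar> \<partial>lborel)))"
        by (intro integrable_mult_left integrable_real_indicator)
          (auto simp: emeasure_lborel_Icc_eq)
      show "(\<lambda>s. \<integral>y. norm (?f s y) \<partial>lborel) \<in> borel_measurable lborel" by measurable
      show "AE s in lborel. norm (\<integral>y. norm (?f s y) \<partial>lborel)
          \<le> norm (indicator {a..b} s * (M * (\<integral>y. \<bar>K y\<bar> \<partial>lborel)))"
      proof (rule AE_I2)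
        fix s
        have "(\<integral>y. norm (?f s y) \<partial>lborel)
            \<le> (\<integral>y. indicator {a..b} s * M * \<bar>K (x + s *\<^sub>R v - y)\<bar> \<partial>lborel)"
        proof (rule integral_mono)
          show "integrable lborel (\<lambda>y. norm (?f s y))" using f_s by simp
          show "integrable lborel (\<lambda>y. indicator {a..b} s * M * \<bar>K (x + s *\<^sub>R v - y)\<bar>)"
            using K_reflect by simp
          show "norm (?f s y) \<le> indicator {a..b} s * M * \<bar>K (x + s *\<^sub>R v - y)\<bar>" for y
            using rb[of y] by (auto simp: indicator_def abs_mult mult.commute
              intro: mult_right_mono)
        qed
        also have "\<dots> = indicator {a..b} s * (M * (\<integral>y. \<bar>K y\<bar> \<partial>lborel))"
          using abs_K_reflect[of "x + s *\<^sub>R v"] by simp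
        finally show "norm (\<integral>y. norm (?f s y) \<partial>lborel)
          \<le> norm (indicator {a..b} s * (M * (\<integral>y. \<bar>K y\<bar> \<partial>lborel)))" by simp
      qed
    qed
    then show "integrable lborel (\<lambda>s. \<integral>y. norm (case (s, y) of (s, y) \<Rightarrow> ?f s y) \<partial>lborel)" by simp
  qed
qed

lemma conv_diff_along_line:
  fixes G r :: "'a::euclidean_space \<Rightarrow> real"
  assumes Gd: "\<And>x. (G has_derivative (\<lambda>h. DG x \<bullet> h)) (at x)" and DGc: "continuous_on UNIV DG"
    and DGi: "integrable lborel (\<lambda>x. DG x \<bullet> v)" and Gb: "\<And>x. \<bar>G x\<bar> \<le> SG"
    and rc: "continuous_on UNIV r" and rb: "\<And>x. \<bar>r x\<bar> \<le> M" and ri: "integrable lborel r"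
    and "a \<le> b"
  shows "conv G r (x + b *\<^sub>R v) - conv G r (x + a *\<^sub>R v)
    = integral {a..b} (\<lambda>s. conv (\<lambda>y. DG y \<bullet> v) r (x + s *\<^sub>R v))"
proof -
  have "continuous_on UNIV G"
    by (intro continuous_at_imp_continuous_on ballI has_derivative_continuous[OF Gd])
  then have Gm[measurable]: "G \<in> borel_measurable borel" by (rule borel_measurable_continuous_onI)
  have [measurable]: "r \<in> borel_measurable borel" "(\<lambda>y. DG y \<bullet> v) \<in> borel_measurable borel"
    using DGc rc by (auto intro!: borel_measurable_continuous_onI continuous_intros)
  define V where "V s = conv (\<lambda>y. DG y \<bullet> v) r (x + s *\<^sub>R v)" for s
  define f where "f s y = indicator {a..b} s * (DG (x + s *\<^sub>R v - y) \<bullet> v) * r y" for s y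
  have Vc: "continuous_on UNIV V"
  proof -
    have "conv (\<lambda>y. DG y \<bullet> v) r = conv r (\<lambda>y. DG y \<bullet> v)" by (simp add: fun_eq_iff conv_commute)
    then have "continuous_on UNIV (conv (\<lambda>y. DG y \<bullet> v) r)"
      using continuous_on_conv[OF rc rb DGi] by simp
    moreover have "continuous_on UNIV (\<lambda>s. x + s *\<^sub>R v)" by (intro continuous_intros)
    ultimately show ?thesis unfolding V_def using continuous_on_compose2 by blast
  qed
  have "conv G r (x + b *\<^sub>R v) - conv G r (x + a *\<^sub>R v)
      = (\<integral>y. (G (x - y + b *\<^sub>R v) - G (x - y + a *\<^sub>R v)) * r y \<partial>lborel)"
    using integrable_conv_integrand[OF Gm Gb ri, where x="x + b *\<^sub>R v"]
      integrable_conv_integrand[OF Gm Gb ri, where x="x + a *\<^sub>R v"]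
    unfolding conv_def by (simp add: left_diff_distrib algebra_simps)
  also have "\<dots> = (\<integral>y. \<integral>s. f s y \<partial>lborel \<partial>lborel)"
    unfolding diff_along_line_eq_lborel_integral[OF Gd DGc \<open>a \<le> b\<close>] f_def
    by (simp add: algebra_simps flip: integral_mult_left_zero)
  also have "\<dots> = (\<integral>s. \<integral>y. f s y \<partial>lborel \<partial>lborel)"
    using lborel_pair.Fubini_integral[OF integrable_pair_line_conv_integrand[OF DGi _ rb]]
    unfolding f_def by simp
  also have "\<dots> = (\<integral>s. indicator {a..b} s * V s \<partial>lborel)"
    unfolding V_def conv_def f_def by (simp add: mult.assoc flip: integral_mult_right_zero)
  also have "\<dots> = integral {a..b} V"
    using set_borel_integral_eq_integral(2)[of "{a..b}" V] borel_integrable_atLeastAtMost'[of a b V]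
      continuous_on_subset[OF Vc]
    by (simp add: set_lebesgue_integral_def set_integrable_def)
  finally show ?thesis unfolding V_def .
qed

lemma conv_has_partial_derivative:
  fixes G r :: "'a::euclidean_space \<Rightarrow> real"
  assumes Gd: "\<And>x. (G has_derivative (\<lambda>h. DG x \<bullet> h)) (at x)" and DGc: "continuous_on UNIV DG"
    and DGi: "integrable lborel (\<lambda>x. DG x \<bullet> v)" and Gb: "\<And>x. \<bar>G x\<bar> \<le> SG"
    and rc: "continuous_on UNIV r" and rb: "\<And>x. \<bar>r x\<bar> \<le> M" and ri: "integrable lborel r"
  shows "((\<lambda>t. conv G r (x + t *\<^sub>R v)) has_real_derivative conv (\<lambda>y. DG y \<bullet> v) r x) (at 0)"
proof -
  let ?V = "\<lambda>s. conv (\<lambda>y. DG y \<bullet> v) r (x + s *\<^sub>R v)"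
  have "conv (\<lambda>y. DG y \<bullet> v) r = conv r (\<lambda>y. DG y \<bullet> v)"
    using DGc rc by (simp add: fun_eq_iff conv_commute
        borel_measurable_continuous_onI continuous_intros)
  then have "continuous_on UNIV (conv (\<lambda>y. DG y \<bullet> v) r)"
    using continuous_on_conv[OF rc rb DGi] by simp
  moreover have "continuous_on {-1..1} (\<lambda>s. x + s *\<^sub>R v)" by (intro continuous_intros)
  ultimately have "continuous_on {-1..1} ?V" using continuous_on_compose2 by blast
  then have "((\<lambda>t. integral {-1..t} ?V) has_real_derivative ?V 0) (at 0 within {-1..1})"
    by (rule integral_has_real_derivative) simp
  then have "((\<lambda>t. integral {-1..t} ?V) has_real_derivative ?V 0) (at 0)"
    using at_within_Icc_at[of "-1::real" 0 1] by simp
  from DERIV_add[OF DERIV_const this]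
  have deriv: "((\<lambda>t. conv G r (x - v) + integral {-1..t} ?V) has_real_derivative ?V 0) (at 0)"
    by simp
  have eq: "conv G r (x - v) + integral {-1..t} ?V = conv G r (x + t *\<^sub>R v)"
    if "t \<in> UNIV" "dist t 0 < 1" for t
    using that conv_diff_along_line[OF Gd DGc DGi Gb rc rb ri, of "-1" t x]
    by (simp add: algebra_simps)
  show ?thesis using has_field_derivative_transform_within[OF deriv, of 1] eq by auto
qed

lemma conv_has_bounded_continuous_partials:
  fixes G r :: "'a::euclidean_space \<Rightarrow> real"
  assumes Gd: "\<And>x. (G has_derivative (\<lambda>h. DG x \<bullet> h)) (at x)" and DGc: "continuous_on UNIV DG"
    and DGi: "\<And>i. i \<in> Basis \<Longrightarrow> integrable lborel (\<lambda>x. DG x \<bullet> i)" and Gb: "\<And>x. \<bar>G x\<bar> \<le> SG"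
    and rc: "continuous_on UNIV r" and rb: "\<And>x. \<bar>r x\<bar> \<le> M" and ri: "integrable lborel r"
  shows "has_bounded_continuous_partials (conv G r) (\<lambda>x. \<Sum>i\<in>Basis. conv (\<lambda>y. DG y \<bullet> i) r x *\<^sub>R i)"
proof -
  let ?w = "\<lambda>x. \<Sum>i\<in>Basis. conv (\<lambda>y. DG y \<bullet> i) r x *\<^sub>R i"
  have Gc: "continuous_on UNIV G"
    by (intro continuous_at_imp_continuous_on ballI has_derivative_continuous[OF Gd])
  have Gm: "G \<in> borel_measurable borel" and rm: "r \<in> borel_measurable borel"
    using Gc rc by (simp_all add: borel_measurable_continuous_onI)
  have partial_eq: "conv (\<lambda>y. DG y \<bullet> i) r = conv r (\<lambda>y. DG y \<bullet> i)" for i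
    using DGc rm by (simp add: fun_eq_iff conv_commute
        borel_measurable_continuous_onI continuous_intros)
  have partial_c: "continuous_on UNIV (conv (\<lambda>y. DG y \<bullet> i) r)" if "i \<in> Basis" for i
    unfolding partial_eq by (rule continuous_on_conv[OF rc rb DGi[OF that]])
  have "norm (?w x) \<le> (\<Sum>i\<in>Basis. M * (\<integral>y. \<bar>DG y \<bullet> i\<bar> \<partial>lborel))" for x
  proof -
    have "norm (?w x) \<le> (\<Sum>i\<in>Basis. \<bar>conv r (\<lambda>y. DG y \<bullet> i) x\<bar>)"
      using norm_sum[of "\<lambda>i. conv (\<lambda>y. DG y \<bullet> i) r x *\<^sub>R i" Basis] by (simp add: partial_eq)
    also have "\<dots> \<le> (\<Sum>i\<in>Basis. M * (\<integral>y. \<bar>DG y \<bullet> i\<bar> \<partial>lborel))"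
      by (intro sum_mono abs_conv_le[OF rm rb DGi])
    finally show ?thesis .
  qed
  then have "bounded (range ?w)" unfolding bounded_iff by blast
  moreover have "bounded (range (conv G r))"
    unfolding bounded_iff using abs_conv_le[OF Gm Gb ri] by auto
  moreover have "((\<lambda>t. conv G r (x + t *\<^sub>R i)) has_real_derivative ?w x \<bullet> i) (at 0)"
    if i: "i \<in> Basis" for x i
    using conv_has_partial_derivative[OF Gd DGc DGi[OF i] Gb rc rb ri, of x] i
    by (simp add: inner_sum_left inner_Basis if_distrib cong: if_cong)
  ultimately show ?thesis
    unfolding has_bounded_continuous_partials_def
    using continuous_on_conv[OF Gc Gb ri] partial_c by (auto intro!: continuous_intros)
qed

text \<open>Replacing \<open>\<rho>\<close> inside the convolution by the continuous bounded function it equals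
  a.e.\ lets the convolution inherit the regularity of \<open>G\<close>.\<close>

lemma conv_has_bounded_continuous_partials_if_AE_positive_part:
  fixes G \<rho> :: "'a::euclidean_space \<Rightarrow> real"
  assumes Gd: "\<And>x. (G has_derivative (\<lambda>h. DG x \<bullet> h)) (at x)" and DGc: "continuous_on UNIV DG"
    and DGi: "\<And>i. i \<in> Basis \<Longrightarrow> integrable lborel (\<lambda>x. DG x \<bullet> i)" and Gb: "\<And>x. \<bar>G x\<bar> \<le> SG"
    and \<rho>: "integrable lborel \<rho>" and \<epsilon>: "0 < \<epsilon>"
    and ae: "AE x in lborel. \<epsilon> * \<rho> x = max (conv G \<rho> x + c) 0"
  shows "has_bounded_continuous_partials (conv G \<rho>) (\<lambda>x. \<Sum>i\<in>Basis. conv (\<lambda>y. DG y \<bullet> i) \<rho> x *\<^sub>R i)"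
proof -
  have Gc: "continuous_on UNIV G"
    by (intro continuous_at_imp_continuous_on ballI has_derivative_continuous[OF Gd])
  define r where "r x = max (conv G \<rho> x + c) 0 / \<epsilon>" for x
  define M where "M = (SG * (\<integral>y. \<bar>\<rho> y\<bar> \<partial>lborel) + \<bar>c\<bar>) / \<epsilon>"
  have rc: "continuous_on UNIV r"
    unfolding r_def using continuous_on_conv[OF Gc Gb \<rho>] \<epsilon> by (intro continuous_intros) auto
  have rb: "\<bar>r x\<bar> \<le> M" for x
    using abs_conv_le[OF borel_measurable_continuous_onI[OF Gc] Gb \<rho>, of x] \<epsilon>
    unfolding r_def M_def by (auto simp: divide_right_mono max_def)
  have r_ae: "AE x in lborel. \<rho> x = r x"
    using ae by eventually_elim (use \<epsilon> in \<open>simp add: r_def field_simps\<close>)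
  have rm: "r \<in> borel_measurable lborel" using borel_measurable_continuous_onI[OF rc] by simp
  have ri: "integrable lborel r" using integrable_cong_AE[OF _ rm r_ae] \<rho> by simp
  have "conv K \<rho> = conv K r" if "K \<in> borel_measurable borel" for K
    using that \<rho> rm r_ae by (intro conv_cong_AE) auto
  moreover have "(\<lambda>x. DG x \<bullet> i) \<in> borel_measurable borel" for i
    using DGc by (intro borel_measurable_continuous_onI continuous_intros)
  ultimately show ?thesis
    using conv_has_bounded_continuous_partials[OF Gd DGc DGi Gb rc rb ri] Gc
    by (simp add: borel_measurable_continuous_onI)
qed

section \<open>The energy and its Euler--Lagrange equation\<close>

lemma integrable_mult_if_L2:
  assumes "L2 f" "L2 g"
  shows "integrable lborel (\<lambda>x. f x * g x)"
proof (rule Bochner_Integration.integrable_bound)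
  show "integrable lborel (\<lambda>x. (f x)\<^sup>2 + (g x)\<^sup>2)" using assms unfolding L2_def by simp
  show "(\<lambda>x. f x * g x) \<in> borel_measurable lborel"
    using assms unfolding L2_def by (simp add: borel_measurable_times)
  have "\<bar>a * b\<bar> \<le> a\<^sup>2 + b\<^sup>2" for a b :: real
  proof -
    have "2 * (\<bar>a\<bar> * \<bar>b\<bar>) \<le> a\<^sup>2 + b\<^sup>2"
      using sum_squares_bound[of "\<bar>a\<bar>" "\<bar>b\<bar>"] by (simp add: mult.assoc)
    moreover have "0 \<le> \<bar>a\<bar> * \<bar>b\<bar>" by simp
    ultimately show ?thesis unfolding abs_mult by linarith
  qed
  then show "AE x in lborel. norm (f x * g x) \<le> norm ((f x)\<^sup>2 + (g x)\<^sup>2)" by simp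
qed

lemma L2_linear_combination:
  assumes "L2 f" "L2 g"
  shows "L2 (\<lambda>x. a * f x + b * g x)"
proof -
  have "(\<lambda>x. (a * f x + b * g x)\<^sup>2) = (\<lambda>x. a\<^sup>2 * (f x)\<^sup>2 + 2 * a * b * (f x * g x) + b\<^sup>2 * (g x)\<^sup>2)"
    by (simp add: fun_eq_iff power2_eq_square algebra_simps)
  then show ?thesis
    using assms integrable_mult_if_L2[OF assms] unfolding L2_def
    by (simp add: borel_measurable_add borel_measurable_times)
qed

text \<open>The first variation \<open>\<delta>E/\<delta>\<rho>\<close> of the energy (for even \<open>G\<close>).\<close>

definition potential :: "real \<Rightarrow> ('a::euclidean_space \<Rightarrow> real) \<Rightarrow> ('a \<Rightarrow> real) \<Rightarrow> 'a \<Rightarrow> real"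
  where "potential \<epsilon> G \<rho> x = \<epsilon> * \<rho> x - conv G \<rho> x"

lemma energy_eq_potential:
  "energy \<epsilon> G \<rho> = 1/2 * (\<integral>x. \<rho> x * potential \<epsilon> G \<rho> x \<partial>lborel)"
  by (simp add: energy_def potential_def)

lemma integrable_mult_potential:
  fixes G f g :: "'a::euclidean_space \<Rightarrow> real"
  assumes Gm: "G \<in> borel_measurable borel" and Gb: "\<And>x. \<bar>G x\<bar> \<le> SG"
    and f: "integrable lborel f" "L2 f" and g: "integrable lborel g" "L2 g"
  shows "integrable lborel (\<lambda>x. f x * potential \<epsilon> G g x)"
proof -
  have "integrable lborel (\<lambda>x. conv G g x * f x)"
    by (rule integrable_bounded_mult[OF f(1) _ abs_conv_le[OF Gm Gb g(1)]]) (use Gm g in simp)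
  then have "integrable lborel (\<lambda>x. \<epsilon> * (f x * g x) - conv G g x * f x)"
    using integrable_mult_if_L2[OF f(2) g(2)] by simp
  then show ?thesis by (simp add: potential_def algebra_simps)
qed

lemma energy_add_scaled:
  fixes G \<rho> d :: "'a::euclidean_space \<Rightarrow> real"
  assumes Gm: "G \<in> borel_measurable borel" and Gb: "\<And>x. \<bar>G x\<bar> \<le> SG" and Gs: "\<And>z. G (- z) = G z"
    and \<rho>: "integrable lborel \<rho>" "L2 \<rho>" and d: "integrable lborel d" "L2 d"
  shows "energy \<epsilon> G (\<lambda>x. \<rho> x + t * d x) = energy \<epsilon> G \<rho>
     + t * (\<integral>x. d x * potential \<epsilon> G \<rho> x \<partial>lborel) + t\<^sup>2 * energy \<epsilon> G d"
proof -
  have cl: "conv G (\<lambda>x. \<rho> x + t * d x) y = conv G \<rho> y + t * conv G d y" for y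
    using conv_linear[OF Gm Gb \<rho>(1) d(1), of 1 t y] by simp
  have i\<rho>d: "integrable lborel (\<lambda>x. \<rho> x * d x)" by (rule integrable_mult_if_L2[OF \<rho>(2) d(2)])
  have "integrable lborel (\<lambda>x. conv G \<rho> x * d x)" "integrable lborel (\<lambda>x. conv G d x * \<rho> x)"
    by (rule integrable_bounded_mult[OF d(1) _ abs_conv_le[OF Gm Gb \<rho>(1)]]
        integrable_bounded_mult[OF \<rho>(1) _ abs_conv_le[OF Gm Gb d(1)]];
        use Gm \<rho> d in \<open>simp add: L2_def\<close>)+
  then have sym: "(\<integral>x. \<rho> x * potential \<epsilon> G d x \<partial>lborel) = (\<integral>x. d x * potential \<epsilon> G \<rho> x \<partial>lborel)"
    using i\<rho>d integral_mult_conv_even_kernel[OF Gm Gb Gs \<rho>(1) d(1)]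
    by (simp add: potential_def right_diff_distrib mult.commute mult.left_commute)
  have expand: "(\<integral>x. (\<rho> x + t * d x) * potential \<epsilon> G (\<lambda>x. \<rho> x + t * d x) x \<partial>lborel)
      = (\<integral>x. \<rho> x * potential \<epsilon> G \<rho> x + t * (d x * potential \<epsilon> G \<rho> x)
          + t * (\<rho> x * potential \<epsilon> G d x) + t\<^sup>2 * (d x * potential \<epsilon> G d x) \<partial>lborel)"
    by (rule Bochner_Integration.integral_cong) (auto simp: potential_def cl algebra_simps
        power2_eq_square)
  have split: "(\<integral>x. \<rho> x * potential \<epsilon> G \<rho> x + t * (d x * potential \<epsilon> G \<rho> x)
          + t * (\<rho> x * potential \<epsilon> G d x) + t\<^sup>2 * (d x * potential \<epsilon> G d x) \<partial>lborel)
      = (\<integral>x. \<rho> x * potential \<epsilon> G \<rho> x \<partial>lborel)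
      + t * (\<integral>x. d x * potential \<epsilon> G \<rho> x \<partial>lborel)
      + t * (\<integral>x. \<rho> x * potential \<epsilon> G d x \<partial>lborel) + t\<^sup>2 * (\<integral>x. d x * potential \<epsilon> G d x \<partial>lborel)"
    using integrable_mult_potential[OF Gm Gb \<rho> \<rho>] integrable_mult_potential[OF Gm Gb d \<rho>]
      integrable_mult_potential[OF Gm Gb \<rho> d] integrable_mult_potential[OF Gm Gb d d]
    by simp
  show ?thesis
    unfolding energy_eq_potential expand split sym by (simp add: algebra_simps)
qed

lemma convex_combination_mem_Pset_L2:
  assumes "\<rho> \<in> Pset" "L2 \<rho>" "\<eta> \<in> Pset" "L2 \<eta>" "0 \<le> t" "t \<le> 1"
  shows "(\<lambda>x. \<rho> x + t * (\<eta> x - \<rho> x)) \<in> Pset \<and> L2 (\<lambda>x. \<rho> x + t * (\<eta> x - \<rho> x))"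
proof -
  have eq: "(\<lambda>x. \<rho> x + t * (\<eta> x - \<rho> x)) = (\<lambda>x. (1 - t) * \<rho> x + t * \<eta> x)"
    by (simp add: fun_eq_iff algebra_simps)
  have \<rho>: "integrable lborel \<rho>" "AE x in lborel. 0 \<le> \<rho> x" "(\<integral>x. \<rho> x \<partial>lborel) = 1"
    and \<eta>: "integrable lborel \<eta>" "AE x in lborel. 0 \<le> \<eta> x" "(\<integral>x. \<eta> x \<partial>lborel) = 1"
    using assms unfolding Pset_def by auto
  have "AE x in lborel. 0 \<le> (1 - t) * \<rho> x + t * \<eta> x"
    using \<rho>(2) \<eta>(2) by eventually_elim (use assms in simp)
  then show ?thesis
    unfolding eq Pset_def using \<rho> \<eta> L2_linear_combination[OF assms(2,4)] by simp
qed

lemma nonneg_if_nonneg_quadratic_near_zero: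
  fixes c q :: real
  assumes "\<And>t. 0 < t \<Longrightarrow> t \<le> 1 \<Longrightarrow> 0 \<le> t * c + t\<^sup>2 * q"
  shows "0 \<le> c"
proof (rule tendsto_lowerbound)
  show "((\<lambda>t. c + t * q) \<longlongrightarrow> c) (at_right 0)" by (auto intro!: tendsto_eq_intros)
  have "0 \<le> c + t * q" if "0 < t" "t \<le> 1" for t
  proof -
    have "0 \<le> t * (c + t * q)" using assms[OF that] by (simp add: power2_eq_square algebra_simps)
    then show ?thesis using that by (simp add: zero_le_mult_iff)
  qed
  then show "\<forall>\<^sub>F t in at_right 0. 0 \<le> c + t * q"
    unfolding eventually_at_right_field by (auto intro!: exI[of _ 1])
qed simp

lemma first_variation_nonneg:
  fixes G \<rho> \<eta> :: "'a::euclidean_space \<Rightarrow> real"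
  assumes Gm: "G \<in> borel_measurable borel" and Gb: "\<And>x. \<bar>G x\<bar> \<le> SG" and Gs: "\<And>z. G (- z) = G z"
    and \<rho>: "\<rho> \<in> Pset" "L2 \<rho>"
    and min: "\<forall>\<eta>\<in>Pset. L2 \<eta> \<longrightarrow> energy \<epsilon> G \<rho> \<le> energy \<epsilon> G \<eta>"
    and \<eta>: "\<eta> \<in> Pset" "L2 \<eta>"
  shows "0 \<le> (\<integral>x. (\<eta> x - \<rho> x) * potential \<epsilon> G \<rho> x \<partial>lborel)"
proof (rule nonneg_if_nonneg_quadratic_near_zero)
  fix t :: real assume "0 < t" "t \<le> 1"
  have d: "integrable lborel (\<lambda>x. \<eta> x - \<rho> x)" "L2 (\<lambda>x. \<eta> x - \<rho> x)"
    using \<rho> \<eta> L2_linear_combination[OF \<eta>(2) \<rho>(2), of 1 "-1"] unfolding Pset_def by auto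
  have "energy \<epsilon> G \<rho> \<le> energy \<epsilon> G (\<lambda>x. \<rho> x + t * (\<eta> x - \<rho> x))"
    using min convex_combination_mem_Pset_L2[OF \<rho> \<eta>, of t] \<open>0 < t\<close> \<open>t \<le> 1\<close> by simp
  also have "\<dots> = energy \<epsilon> G \<rho> + t * (\<integral>x. (\<eta> x - \<rho> x) * potential \<epsilon> G \<rho> x \<partial>lborel)
      + t\<^sup>2 * energy \<epsilon> G (\<lambda>x. \<eta> x - \<rho> x)"
    using \<rho> unfolding Pset_def by (intro energy_add_scaled[OF Gm Gb Gs _ _ d]) auto
  finally show "0 \<le> t * (\<integral>x. (\<eta> x - \<rho> x) * potential \<epsilon> G \<rho> x \<partial>lborel)
      + t\<^sup>2 * energy \<epsilon> G (\<lambda>x. \<eta> x - \<rho> x)" by simp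
qed

lemma integrable_L2_indicator:
  fixes S :: "'a::euclidean_space set"
  assumes "S \<in> sets lborel" "emeasure lborel S < \<infinity>"
  shows "integrable lborel (indicator S :: 'a \<Rightarrow> real)" "L2 (indicator S :: 'a \<Rightarrow> real)"
proof -
  show int: "integrable lborel (indicator S :: 'a \<Rightarrow> real)"
    using assms by (intro integrable_real_indicator) auto
  have "(\<lambda>x. (indicator S x :: real)\<^sup>2) = indicator S" by (simp add: fun_eq_iff indicator_def)
  then show "L2 (indicator S :: 'a \<Rightarrow> real)" unfolding L2_def using int by simp
qed

lemma uniform_density_mem_Pset_L2:
  fixes S :: "'a::euclidean_space set"
  assumes S: "S \<in> sets lborel" "emeasure lborel S < \<infinity>" and m: "0 < measure lborel S"
  shows "(\<lambda>x. indicator S x / measure lborel S) \<in> Pset \<and> L2 (\<lambda>x. indicator S x / measure lborel S)"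
proof -
  note ind = integrable_L2_indicator[OF S]
  have "(\<lambda>x. (indicator S x / measure lborel S)\<^sup>2) = (\<lambda>x. indicator S x / (measure lborel S)\<^sup>2)"
    by (simp add: fun_eq_iff indicator_def power2_eq_square)
  then have "L2 (\<lambda>x. indicator S x / measure lborel S)"
    using ind unfolding L2_def by simp
  moreover have "(\<integral>x. indicator S x / measure lborel S \<partial>lborel) = 1"
    using S m by simp
  ultimately show ?thesis
    unfolding Pset_def using ind m by simp
qed

lemma AE_ge_if_null_sublevel_sets:
  fixes f :: "'a::euclidean_space \<Rightarrow> real"
  assumes "\<And>n. {x \<in> ball 0 (real n). f x < c - 1 / real (Suc n)} \<in> null_sets lborel"
  shows "AE x in lborel. c \<le> f x"
proof -
  have "AE x in lborel. \<forall>n. x \<notin> {x \<in> ball 0 (real n). f x < c - 1 / real (Suc n)}"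
    by (intro AE_all_countable[THEN iffD2] allI AE_not_in assms)
  then show ?thesis
  proof eventually_elim
    case (elim x)
    show "c \<le> f x"
    proof (rule ccontr)
      assume "\<not> c \<le> f x"
      then have gap: "0 < c - f x" by simp
      obtain n1 :: nat where n1: "norm x < real n1" using reals_Archimedean2 by blast
      obtain n2 :: nat where n2: "1 / (c - f x) < real n2" using reals_Archimedean2 by blast
      define n where "n = max n1 n2"
      have "norm x < real n" using n1 unfolding n_def by (simp add: less_le_trans)
      moreover have "1 / (c - f x) < real (Suc n)" using n2 unfolding n_def by simp
      then have "1 / real (Suc n) < c - f x" using gap by (simp add: field_simps)
      ultimately show False using elim[rule_format, of n] by simp
    qed
  qed
qed

lemma AE_ge_if_set_integrals_ge:
  fixes f :: "'a::euclidean_space \<Rightarrow> real"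
  assumes fm[measurable]: "f \<in> borel_measurable borel"
    and int: "\<And>S. S \<in> sets lborel \<Longrightarrow> emeasure lborel S < \<infinity> \<Longrightarrow>
      integrable lborel (\<lambda>x. indicator S x * f x)"
    and ge: "\<And>S. S \<in> sets lborel \<Longrightarrow> emeasure lborel S < \<infinity> \<Longrightarrow> 0 < measure lborel S \<Longrightarrow>
      c * measure lborel S \<le> (\<integral>x. indicator S x * f x \<partial>lborel)"
  shows "AE x in lborel. c \<le> f x"
proof (rule AE_ge_if_null_sublevel_sets, rule ccontr)
  fix n
  define S where "S = {x \<in> ball 0 (real n). f x < c - 1 / real (Suc n)}"
  assume "S \<notin> null_sets lborel"
  moreover have Sm: "S \<in> sets lborel" unfolding S_def by measurable
  moreover have Sfin: "emeasure lborel S < \<infinity>"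
    by (rule emeasure_bounded_finite, rule bounded_subset[OF bounded_ball[of 0 "real n"]])
      (auto simp: S_def)
  ultimately have m: "0 < measure lborel S"
    by (simp add: emeasure_eq_ennreal_measure less_top null_sets_def zero_less_measure_iff)
  have "(\<integral>x. indicator S x * f x \<partial>lborel) \<le> (\<integral>x. indicator S x * (c - 1 / real (Suc n)) \<partial>lborel)"
  proof (rule integral_mono[OF int[OF Sm Sfin]])
    show "integrable lborel (\<lambda>x. indicator S x * (c - 1 / real (Suc n)))"
      using integrable_L2_indicator(1)[OF Sm Sfin] by simp
    show "indicator S x * f x \<le> indicator S x * (c - 1 / real (Suc n))" for x
      by (auto simp: S_def indicator_def)
  qed
  also have "\<dots> = (c - 1 / real (Suc n)) * measure lborel S" by simp
  also have "\<dots> < c * measure lborel S" using m by (simp add: algebra_simps)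
  finally show False using ge[OF Sm Sfin m] by simp
qed

lemma potential_ge_lagrange_multiplier:
  fixes G \<rho> :: "'a::euclidean_space \<Rightarrow> real"
  assumes Gm: "G \<in> borel_measurable borel" and Gb: "\<And>x. \<bar>G x\<bar> \<le> SG" and Gs: "\<And>z. G (- z) = G z"
    and \<rho>: "\<rho> \<in> Pset" "L2 \<rho>"
    and min: "\<forall>\<eta>\<in>Pset. L2 \<eta> \<longrightarrow> energy \<epsilon> G \<rho> \<le> energy \<epsilon> G \<eta>"
  shows "AE x in lborel. (\<integral>y. \<rho> y * potential \<epsilon> G \<rho> y \<partial>lborel) \<le> potential \<epsilon> G \<rho> x"
proof -
  let ?\<Phi> = "potential \<epsilon> G \<rho>" and ?c = "\<integral>y. \<rho> y * potential \<epsilon> G \<rho> y \<partial>lborel"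
  have \<rho>1: "integrable lborel \<rho>" using \<rho> unfolding Pset_def by auto
  then have [measurable]: "\<rho> \<in> borel_measurable borel" by simp
  have i\<rho>\<Phi>: "integrable lborel (\<lambda>x. \<rho> x * ?\<Phi> x)"
    by (rule integrable_mult_potential[OF Gm Gb \<rho>1 \<rho>(2) \<rho>1 \<rho>(2)])
  show ?thesis
  proof (rule AE_ge_if_set_integrals_ge)
    show "?\<Phi> \<in> borel_measurable borel" unfolding potential_def[abs_def] using Gm by measurable
    fix S :: "'a set" assume S: "S \<in> sets lborel" "emeasure lborel S < \<infinity>"
    show i: "integrable lborel (\<lambda>x. indicator S x * ?\<Phi> x)"
      using integrable_L2_indicator[OF S] by (intro integrable_mult_potential[OF Gm Gb _ _ \<rho>1 \<rho>(2)])
    assume m: "0 < measure lborel S"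
    let ?\<eta> = "\<lambda>x. indicator S x / measure lborel S"
    have "0 \<le> (\<integral>x. (?\<eta> x - \<rho> x) * ?\<Phi> x \<partial>lborel)"
      using uniform_density_mem_Pset_L2[OF S m]
      by (intro first_variation_nonneg[OF Gm Gb Gs \<rho> min]) auto
    also have "\<dots> = (\<integral>x. indicator S x * ?\<Phi> x / measure lborel S - \<rho> x * ?\<Phi> x \<partial>lborel)"
      by (simp add: left_diff_distrib)
    also have "\<dots> = (\<integral>x. indicator S x * ?\<Phi> x \<partial>lborel) / measure lborel S - ?c"
      using i i\<rho>\<Phi> by simp
    finally show "?c * measure lborel S \<le> (\<integral>x. indicator S x * ?\<Phi> x \<partial>lborel)"
      using m by (simp add: field_simps)
  qed
qed

lemma euler_lagrange_equation:
  fixes G \<rho> :: "'a::euclidean_space \<Rightarrow> real"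
  assumes Gm: "G \<in> borel_measurable borel" and Gb: "\<And>x. \<bar>G x\<bar> \<le> SG" and Gs: "\<And>z. G (- z) = G z"
    and \<epsilon>: "0 < \<epsilon>" and \<rho>: "\<rho> \<in> Pset" "L2 \<rho>"
    and min: "\<forall>\<eta>\<in>Pset. L2 \<eta> \<longrightarrow> energy \<epsilon> G \<rho> \<le> energy \<epsilon> G \<eta>"
  shows "\<exists>c. AE x in lborel. \<epsilon> * \<rho> x = max (conv G \<rho> x + c) 0"
proof -
  have \<rho>1: "integrable lborel \<rho>" and \<rho>_nonneg: "AE x in lborel. 0 \<le> \<rho> x"
    and \<rho>_mass: "(\<integral>x. \<rho> x \<partial>lborel) = 1"
    using \<rho> unfolding Pset_def by auto
  let ?\<Phi> = "potential \<epsilon> G \<rho>"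
  define c where "c = (\<integral>x. \<rho> x * ?\<Phi> x \<partial>lborel)"
  have i\<rho>\<Phi>: "integrable lborel (\<lambda>x. \<rho> x * ?\<Phi> x)"
    by (rule integrable_mult_potential[OF Gm Gb \<rho>1 \<rho>(2) \<rho>1 \<rho>(2)])
  have \<Phi>_ge: "AE x in lborel. c \<le> ?\<Phi> x"
    unfolding c_def by (rule potential_ge_lagrange_multiplier[OF Gm Gb Gs \<rho> min])
  have "(\<integral>x. \<rho> x * (?\<Phi> x - c) \<partial>lborel) = 0"
    using i\<rho>\<Phi> \<rho>1 \<rho>_mass by (simp add: c_def right_diff_distrib)
  moreover have "integrable lborel (\<lambda>x. \<rho> x * (?\<Phi> x - c))"
    using i\<rho>\<Phi> \<rho>1 by (simp add: right_diff_distrib)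
  moreover have "AE x in lborel. 0 \<le> \<rho> x * (?\<Phi> x - c)"
    using \<Phi>_ge \<rho>_nonneg by eventually_elim simp
  ultimately have slack: "AE x in lborel. \<rho> x * (?\<Phi> x - c) = 0"
    by (simp add: integral_nonneg_eq_0_iff_AE)
  have "AE x in lborel. \<epsilon> * \<rho> x = max (conv G \<rho> x + c) 0"
    using slack \<Phi>_ge \<rho>_nonneg
  proof eventually_elim
    case (elim x)
    show ?case
    proof (cases "\<rho> x = 0")
      case True
      then show ?thesis using elim(2) by (simp add: potential_def)
    next
      case False
      then have "\<epsilon> * \<rho> x = conv G \<rho> x + c" using elim(1) by (simp add: potential_def)
      moreover have "0 < \<epsilon> * \<rho> x" using False elim(3) \<epsilon> by simp
      ultimately show ?thesis by simp
    qed
  qed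
  then show ?thesis by blast
qed

theorem proposition3p1:
  fixes \<epsilon> :: real
    and G :: "'a::euclidean_space \<Rightarrow> real"
    and DG :: "'a \<Rightarrow> 'a"
    and HG :: "'a \<Rightarrow> ('a \<Rightarrow>\<^sub>L 'a)"
    and g g1 :: "real \<Rightarrow> real"
    and g2_0 :: real
    and \<rho> :: "'a \<Rightarrow> real"
  assumes eps_pos: "\<epsilon> > 0"
    and G_nonneg: "\<forall>x. G x \<ge> 0"
    and G_supp: "closure {x. G x \<noteq> 0} = UNIV"
    and G_diff: "\<forall>x. (G has_derivative (\<lambda>h. DG x \<bullet> h)) (at x)"
    and DG_diff: "\<forall>x. (DG has_derivative blinfun_apply (HG x)) (at x)"
    and HG_cont: "continuous_on UNIV HG"
    and G_int: "integrable lborel G"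
    and DG_int: "\<forall>i\<in>Basis. integrable lborel (\<lambda>x. DG x \<bullet> i)"
    and G_bdd: "bounded (range G)"
    and G_radial: "\<forall>x. G x = g (norm x)"
    and g_deriv: "\<forall>r\<ge>0. (g has_real_derivative g1 r) (at r within {0..})"
    and g_deriv_neg: "\<forall>r>0. g1 r < 0"
    and g_second: "(g1 has_real_derivative g2_0) (at 0 within {0..})"
    and g2_neg: "g2_0 < 0"
    and g_lim: "(g \<longlongrightarrow> 0) at_top"
    and G_mass: "(\<integral>x. G x \<partial>lborel) = 1"
    and rho_P: "\<rho> \<in> Pset"
    and rho_L2: "L2 \<rho>"
    and rho_min: "\<forall>\<eta>\<in>Pset. L2 \<eta> \<longrightarrow> energy \<epsilon> G \<rho> \<le> energy \<epsilon> G \<eta>"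
  shows "\<exists>w v. weak_grad (\<lambda>x. (\<rho> x)\<^sup>2 / 2) w \<and> weak_grad (conv G \<rho>) v \<and>
           (AE x in lborel. \<epsilon> *\<^sub>R w x - \<rho> x *\<^sub>R v x = 0)"
proof -
  have Gd: "\<And>x. (G has_derivative (\<lambda>h. DG x \<bullet> h)) (at x)" using G_diff by blast
  have DGc: "continuous_on UNIV DG"
    using DG_diff by (intro continuous_at_imp_continuous_on ballI has_derivative_continuous) blast
  have Gm: "G \<in> borel_measurable borel"
    by (intro borel_measurable_continuous_onI continuous_at_imp_continuous_on ballI
        has_derivative_continuous[OF Gd])
  obtain SG where Gb: "\<And>x. \<bar>G x\<bar> \<le> SG"
    using G_bdd unfolding bounded_iff by (metis real_norm_def rangeI)
  have Gs: "\<And>z. G (- z) = G z" using G_radial by simp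
  have \<rho>: "integrable lborel \<rho>" using rho_P unfolding Pset_def by auto
  obtain c where EL: "AE x in lborel. \<epsilon> * \<rho> x = max (conv G \<rho> x + c) 0"
    using euler_lagrange_equation[OF Gm Gb Gs eps_pos rho_P rho_L2 rho_min] by blast
  define v where "v x = (\<Sum>i\<in>Basis. conv (\<lambda>y. DG y \<bullet> i) \<rho> x *\<^sub>R i)" for x
  have partials: "has_bounded_continuous_partials (conv G \<rho>) v"
    unfolding v_def using DG_int
    by (intro conv_has_bounded_continuous_partials_if_AE_positive_part[OF Gd DGc _ Gb \<rho> eps_pos EL])
      auto
  have "weak_grad (\<lambda>x. (\<rho> x)\<^sup>2 / 2) (\<lambda>x. (max (conv G \<rho> x + c) 0 / \<epsilon>\<^sup>2) *\<^sub>R v x)"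
    using \<rho> by (intro weak_grad_half_square_if_AE_positive_part[OF partials eps_pos _ EL]) auto
  moreover have "weak_grad (conv G \<rho>) v"
    by (rule weak_grad_if_bounded_continuous_partials[OF partials])
  moreover have "AE x in lborel. \<epsilon> *\<^sub>R ((max (conv G \<rho> x + c) 0 / \<epsilon>\<^sup>2) *\<^sub>R v x) - \<rho> x *\<^sub>R v x = 0"
    using EL
  proof eventually_elim
    case (elim x)
    show ?case unfolding elim[symmetric] using eps_pos by (simp add: power2_eq_square)
  qed
  ultimately show ?thesis by blast
qed

end
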